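(* Let $\sigma$ be any satisfaction function, i.e., any assignment that gives, for every participatory budgeting instance $I=\langle P,c,b\rangle$, a function $\sigma: 2^{P}\to\mathbb{R}_{\geq 0}$ that is inclusion-monotonic ($\sigma(Q)\geq\sigma(Q')$ whenever $Q'\subseteq Q\subseteq P$) and satisfies $\sigma(Q)=0$ if and only if $Q=\emptyset$. Then there exist a participatory budgeting instance $I=\langle P,c,b\rangle$ and a profile $\mathbf{A}=(A_1,\ldots,A_n)$ of approval ballots such that no feasible budget allocation $\pi\subseteq P$ with $c(\pi)\leq b$ satisfies strong extended justified representation for $\sigma$ (Strong-EJR$[\sigma]$).
   Context: A participatory budgeting instance is a triple $I=\langle P,c,b\rangle$ where $P$ is a finite set of projects, $c:P\to\mathbb{R}_{>0}$ is a cost function, and $b\in\mathbb{R}_{>0}$ is the budget limit, with $c(p)\leq b$ for all $p\in P$; for $Q\subseteq P$ write $c(Q)=\sum_{p\in Q}c(p)$. A feasible budget allocation is a set $\pi\subseteq P$ with $c(\pi)\leq b$. There is a set of voters $N=\{1,\ldots,n\}$; an approval ballot of voter $i$ is a function $A_i:P\to\{0,1\}$ ($A_i(p)=1$ means $i$ approves $p$), and a profile is $\mathbf{A}=(A_1,\ldots,A_n)$. For a satisfaction function $\sigma$, the satisfaction of voter $i$ for a set $Q\subseteq P$ is $\sigma_i(Q)=\sigma(\{p\in Q: A_i(p)=1\})$. For $Q\subseteq P$, a non-empty group of voters $S\subseteq N$ is $Q$-cohesive if every voter in $S$ approves every project in $Q$ and $\frac{|S|}{n}\cdot b\geq c(Q)$.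 A feasible budget allocation $\pi$ satisfies Strong-EJR$[\sigma]$ if for every $Q\subseteq P$ and every $Q$-cohesive group $S$, we have $\sigma_i(\pi)\geq\sigma_i(Q)$ for all $i\in S$. *)

theory Defs
  imports Complex_Main
begin

definition pb_instance :: "nat set \<Rightarrow> (nat \<Rightarrow> real) \<Rightarrow> real \<Rightarrow> bool" where
  "pb_instance P c b \<longleftrightarrow> finite P \<and> (\<forall>p\<in>P. c p > 0) \<and> b > 0 \<and> (\<forall>p\<in>P. c p \<le> b)"

definition cost :: "(nat \<Rightarrow> real) \<Rightarrow> nat set \<Rightarrow> real" where
  "cost c Q = (\<Sum>p\<in>Q. c p)"

definition feasible :: "nat set \<Rightarrow> (nat \<Rightarrow> real) \<Rightarrow> real \<Rightarrow> nat set \<Rightarrow> bool" where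
  "feasible P c b \<pi> \<longleftrightarrow> \<pi> \<subseteq> P \<and> cost c \<pi> \<le> b"

definition satisfaction_function ::
  "(nat set \<Rightarrow> (nat \<Rightarrow> real) \<Rightarrow> real \<Rightarrow> nat set \<Rightarrow> real) \<Rightarrow> bool" where
  "satisfaction_function \<sigma> \<longleftrightarrow>
     (\<forall>P c b. pb_instance P c b \<longrightarrow>
        (\<forall>Q Q'. Q' \<subseteq> Q \<and> Q \<subseteq> P \<longrightarrow> \<sigma> P c b Q' \<le> \<sigma> P c b Q) \<and>
        (\<forall>Q. Q \<subseteq> P \<longrightarrow> \<sigma> P c b Q \<ge> 0 \<and> (\<sigma> P c b Q = 0 \<longleftrightarrow> Q = {})))"

text \<open>Voters are 1..n; A i p means voter i approves project p.\<close>
definition cohesive ::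
  "nat \<Rightarrow> (nat \<Rightarrow> nat \<Rightarrow> bool) \<Rightarrow> nat set \<Rightarrow> (nat \<Rightarrow> real) \<Rightarrow> real \<Rightarrow> nat set \<Rightarrow> nat set \<Rightarrow> bool" where
  "cohesive n A P c b Q S \<longleftrightarrow>
     Q \<subseteq> P \<and> S \<noteq> {} \<and> S \<subseteq> {1..n} \<and> (\<forall>i\<in>S. \<forall>p\<in>Q. A i p) \<and>
     real (card S) / real n * b \<ge> cost c Q"

definition strong_EJR ::
  "(nat set \<Rightarrow> (nat \<Rightarrow> real) \<Rightarrow> real \<Rightarrow> nat set \<Rightarrow> real) \<Rightarrow>
   nat \<Rightarrow> (nat \<Rightarrow> nat \<Rightarrow> bool) \<Rightarrow> nat set \<Rightarrow> (nat \<Rightarrow> real) \<Rightarrow> real \<Rightarrow> nat set \<Rightarrow> bool" where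
  "strong_EJR \<sigma> n A P c b \<pi> \<longleftrightarrow>
     (\<forall>Q S. cohesive n A P c b Q S \<longrightarrow>
        (\<forall>i\<in>S. \<sigma> P c b {p\<in>\<pi>. A i p} \<ge> \<sigma> P c b {p\<in>Q. A i p}))"

end

theory Submission
  imports Defs
begin

text \<open>Take three projects, each costing two thirds of the budget, and three voters, each
  approving exactly two of them, every project being rejected by exactly one voter. Every
  project together with its two supporters forms a cohesive group, yet at most one project is
  affordable. Whichever project is funded, the voter rejecting it belongs to the cohesive
  group of another project, so Strong-EJR demands positive satisfaction for that voter,
  while the funded outcome gives that voter the empty set, of satisfaction zero.\<close>

lemma satisfaction_empty:
  assumes "satisfaction_function \<sigma>" and "pb_instance P c b"
  shows "\<sigma> P c b {} = 0"
  using assms unfolding satisfaction_function_def by blast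

lemma satisfaction_pos:
  assumes "satisfaction_function \<sigma>" and "pb_instance P c b" and "Q \<subseteq> P" and "Q \<noteq> {}"
  shows "\<sigma> P c b Q > 0"
proof -
  have "\<sigma> P c b Q \<ge> 0" and "\<sigma> P c b Q \<noteq> 0"
    using assms unfolding satisfaction_function_def by blast+
  then show ?thesis
    by simp
qed

lemma strong_EJR_cohesive_member_approves:
  assumes "satisfaction_function \<sigma>" and "pb_instance P c b"
    and "strong_EJR \<sigma> n A P c b \<pi>" and "cohesive n A P c b Q S" and "Q \<noteq> {}" and "i \<in> S"
  shows "\<exists>p\<in>\<pi>. A i p"
proof (rule ccontr)
  assume "\<not> (\<exists>p\<in>\<pi>. A i p)"
  then have "{p\<in>\<pi>. A i p} = {}"
    by blast
  have "{p\<in>Q. A i p} = Q" and "Q \<subseteq> P"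
    using \<open>cohesive n A P c b Q S\<close> \<open>i \<in> S\<close> unfolding cohesive_def by auto
  then have "0 < \<sigma> P c b {p\<in>Q. A i p}"
    using satisfaction_pos[OF assms(1,2)] \<open>Q \<noteq> {}\<close> by simp
  also have "\<dots> \<le> \<sigma> P c b {p\<in>\<pi>. A i p}"
    using assms(3,4,6) unfolding strong_EJR_def by blast
  also have "\<dots> = 0"
    using \<open>{p\<in>\<pi>. A i p} = {}\<close> satisfaction_empty[OF assms(1,2)] by metis
  finally show False
    by simp
qed

lemma feasible_subset_singleton:
  assumes "pb_instance P c b" and "P \<noteq> {}" and "\<And>p. p \<in> P \<Longrightarrow> b < 2 * c p"
    and "feasible P c b \<pi>"
  obtains q where "q \<in> P" and "\<pi> \<subseteq> {q}"
proof -
  have "\<pi> \<subseteq> P" and "finite P" and pos: "\<forall>r\<in>P. c r > 0"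
    using assms(1,4) unfolding pb_instance_def feasible_def by auto
  have unique: "p = q" if "p \<in> \<pi>" and "q \<in> \<pi>" for p q
  proof (rule ccontr)
    assume "p \<noteq> q"
    then have "c p + c q = cost c {p, q}"
      unfolding cost_def by simp
    also have "\<dots> \<le> cost c \<pi>"
      unfolding cost_def using that \<open>\<pi> \<subseteq> P\<close> \<open>finite P\<close> pos
      by (intro sum_mono2) (auto intro: finite_subset less_imp_le)
    also have "\<dots> \<le> b"
      using assms(4) unfolding feasible_def by simp
    finally have "c p + c q \<le> b" .
    moreover have "b < 2 * c p" and "b < 2 * c q"
      using assms(3) that \<open>\<pi> \<subseteq> P\<close> by auto
    ultimately show False
      by linarith
  qed
  show thesis
  proof (cases "\<pi> = {}")
    case True
    with \<open>P \<noteq> {}\<close> show thesis using that by blast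
  next
    case False
    with unique \<open>\<pi> \<subseteq> P\<close> show thesis using that by blast
  qed
qed

definition cyclic_ballot :: "nat \<Rightarrow> nat \<Rightarrow> bool" where
  "cyclic_ballot i p \<longleftrightarrow> p \<noteq> i mod 3"

lemma cyclic_supporters_cohesive:
  assumes "p < 3"
  shows "cohesive 3 cyclic_ballot {0, 1, 2} (\<lambda>_. 2/3) 1 {p} {i\<in>{1..3}. cyclic_ballot i p}"
proof -
  have voters: "{1..3::nat} = {1, 2, 3}"
    by auto
  have "{i\<in>{1..3}. cyclic_ballot i p} = {1..3} - {if p = 0 then 3 else p}"
    using assms unfolding cyclic_ballot_def voters by auto
  then have "card {i\<in>{1..3}. cyclic_ballot i p} = 2"
    using assms by simp
  moreover from this have "{i\<in>{1..3}. cyclic_ballot i p} \<noteq> {}"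
    by (metis card.empty zero_neq_numeral)
  ultimately show ?thesis
    using assms unfolding cohesive_def cost_def by auto
qed

theorem mainTheorem1:
  fixes \<sigma> :: "nat set \<Rightarrow> (nat \<Rightarrow> real) \<Rightarrow> real \<Rightarrow> nat set \<Rightarrow> real"
  assumes "satisfaction_function \<sigma>"
  shows "\<exists>P c b n A. pb_instance P c b \<and> n \<ge> 1 \<and>
           \<not> (\<exists>\<pi>. feasible P c b \<pi> \<and> strong_EJR \<sigma> n A P c b \<pi>)"
proof -
  define P :: "nat set" where "P = {0, 1, 2}"
  define c :: "nat \<Rightarrow> real" where "c = (\<lambda>_. 2/3)"
  have inst: "pb_instance P c 1"
    unfolding pb_instance_def P_def c_def by auto
  have "\<not> strong_EJR \<sigma> 3 cyclic_ballot P c 1 \<pi>" if feas: "feasible P c 1 \<pi>" for \<pi>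
  proof
    assume ejr: "strong_EJR \<sigma> 3 cyclic_ballot P c 1 \<pi>"
    obtain q where "q \<in> P" and "\<pi> \<subseteq> {q}"
      using feasible_subset_singleton[OF inst _ _ feas] unfolding P_def c_def by auto
    let ?i = "if q = 0 then 3 else q"
    have "?i \<in> {i\<in>{1..3}. cyclic_ballot i (Suc q mod 3)}" and "\<not> cyclic_ballot ?i q"
      using \<open>q \<in> P\<close> unfolding P_def cyclic_ballot_def by auto
    moreover have "cohesive 3 cyclic_ballot P c 1 {Suc q mod 3} {i\<in>{1..3}. cyclic_ballot i (Suc q mod 3)}"
      using cyclic_supporters_cohesive[of "Suc q mod 3"] unfolding P_def c_def by simp
    ultimately obtain p where "p \<in> \<pi>" and "cyclic_ballot ?i p"
      using strong_EJR_cohesive_member_approves[OF assms inst ejr] by blast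
    with \<open>\<pi> \<subseteq> {q}\<close> \<open>\<not> cyclic_ballot ?i q\<close> show False
      by blast
  qed
  with inst show ?thesis
    by (intro exI[of _ P] exI[of _ c] exI[of _ 1] exI[of _ 3] exI[of _ cyclic_ballot]) auto
qed

end
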